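(* Let $(X,\mathcal A)$ be a measurable space and $h,v:X\to X$ bi-measurable one-to-one maps such that $h(X)$ and $v(X)$ form a partition of $X$. Let $B\in\mathcal A$ be such that $X=\bigcup_{w\in\mathcal M(h,v)}wB$. Then: (1) if $\mu,\nu$ are two $\{h,v\}$-invariant measures on $X$ that are equal on $B$, then $\mu=\nu$ on $X$; (2) every measure that is $\mathcal M(h,v)$-invariant on $B$ is the restriction to $B$ of an $\mathcal M(h,v)$-invariant measure on $X$; (3) if $h(X\setminus B)\cap B=v(X\setminus B)\cap B=\emptyset$, then every measure that is $\{h,v\}$-invariant on $B$ is the restriction to $B$ of an $\mathcal M(h,v)$-invariant measure on $X$.
   Context: A map $g:X\to X$ is bi-measurable if it is measurable and $gA\in\mathcal A$ for all $A\in\mathcal A$. $\mathcal M(h,v)$ is the monoid generated by $h,v$ under composition, containing the identity. For a set $E$ of bi-measurable one-to-one maps and $B\in\mathcal A$, a measure $\mu$ on the measurable subsets of $B$ is $E$-invariant on $B$ if for all measurable $A\subset B$ and all $g\in E$, $gA\subset B$ implies $\mu(gA)=\mu(A)$. A measure on $X$ is $E$-invariant if it is $E$-invariant on $B=X$. *)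

theory Defs
  imports "HOL-Analysis.Analysis"
begin

definition bimeasurable :: "'a measure \<Rightarrow> ('a \<Rightarrow> 'a) \<Rightarrow> bool" where
  "bimeasurable M g \<longleftrightarrow> g \<in> M \<rightarrow>\<^sub>M M \<and> (\<forall>A\<in>sets M. g ` A \<in> sets M)"

inductive_set monoid_gen :: "('a \<Rightarrow> 'a) \<Rightarrow> ('a \<Rightarrow> 'a) \<Rightarrow> ('a \<Rightarrow> 'a) set"
  for h v where
    id_in: "id \<in> monoid_gen h v"
  | h_comp: "w \<in> monoid_gen h v \<Longrightarrow> h \<circ> w \<in> monoid_gen h v"
  | v_comp: "w \<in> monoid_gen h v \<Longrightarrow> v \<circ> w \<in> monoid_gen h v"

definition invariant_on :: "'a measure \<Rightarrow> ('a \<Rightarrow> 'a) set \<Rightarrow> 'a set \<Rightarrow> 'a measure \<Rightarrow> bool" where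
  "invariant_on M E B \<mu> \<longleftrightarrow>
     (\<forall>A\<in>sets M. \<forall>g\<in>E. A \<subseteq> B \<longrightarrow> g ` A \<subseteq> B \<longrightarrow> emeasure \<mu> (g ` A) = emeasure \<mu> A)"

end

theory Submission
  imports Defs
begin

text \<open>Enumerate the countable monoid as \<open>W\<^sub>0, W\<^sub>1, \<dots>\<close> and cut \<open>X\<close> into the disjoint tiles
  \<open>E\<^sub>k = W\<^sub>k B - (\<Union>j<k. W\<^sub>j B)\<close>. A measurable \<open>A \<subseteq> X\<close> is then the disjoint union of the sets
  \<open>W\<^sub>k C\<^sub>k\<close> with \<open>C\<^sub>k = W\<^sub>k\<^sup>-\<^sup>1(A \<inter> E\<^sub>k) \<inter> B \<subseteq> B\<close>, so every invariant measure satisfies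
  \<open>\<mu> A = (\<Sum>k. \<mu> C\<^sub>k)\<close>: this gives uniqueness (part 1), and read as a definition it extends a
  measure on \<open>B\<close> (part 2). The extension is invariant because the monoid acts freely: as \<open>h\<close>, \<open>v\<close>
  are injective with disjoint images, \<open>w C = w' C'\<close> lets one cancel the common prefix of \<open>w\<close> and
  \<open>w'\<close>, leaving \<open>C' = s C\<close> or \<open>C = s C'\<close> for some \<open>s\<close> in the monoid. For part 3, invariance under
  \<open>h\<close> and \<open>v\<close> on \<open>B\<close> propagates along words as long as \<open>h\<close>, \<open>v\<close> never map \<open>X - B\<close> into \<open>B\<close>.\<close>

lemma monoid_gen_induct [consumes 1, case_names id comp]:
  assumes "w \<in> monoid_gen h v" and "P id"
    and "\<And>g u. g \<in> {h, v} \<Longrightarrow> u \<in> monoid_gen h v \<Longrightarrow> P u \<Longrightarrow> P (g \<circ> u)"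
  shows "P w"
  using assms(1) by induction (use assms(2,3) in blast)+

lemma monoid_gen_cases [consumes 1, case_names id comp]:
  assumes "w \<in> monoid_gen h v" and "w = id \<Longrightarrow> P"
    and "\<And>g u. g \<in> {h, v} \<Longrightarrow> u \<in> monoid_gen h v \<Longrightarrow> w = g \<circ> u \<Longrightarrow> P"
  shows P
  using assms(1) by cases (use assms(2,3) in blast)+

lemma monoid_gen_compI: "g \<in> {h, v} \<Longrightarrow> u \<in> monoid_gen h v \<Longrightarrow> g \<circ> u \<in> monoid_gen h v"
  by (auto intro: monoid_gen.intros)

lemma monoid_gen_comp:
  assumes "g \<in> monoid_gen h v" and "w \<in> monoid_gen h v"
  shows "g \<circ> w \<in> monoid_gen h v"
  using assms(1)
proof (induction rule: monoid_gen_induct)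
  case (comp g u)
  then have "g \<circ> (u \<circ> w) \<in> monoid_gen h v" using monoid_gen_compI by blast
  then show ?case by (simp only: comp_assoc)
qed (simp only: id_comp assms(2))

lemma countable_monoid_gen: "countable (monoid_gen h v)"
proof -
  let ?eval = "\<lambda>bs. foldr (\<lambda>b u. (if b then h else v) \<circ> u) bs id"
  have "monoid_gen h v \<subseteq> range ?eval"
  proof
    fix w assume "w \<in> monoid_gen h v"
    then show "w \<in> range ?eval"
    proof (induction rule: monoid_gen_induct)
      case id
      show ?case by (rule range_eqI[of _ _ "[]"]) simp
    next
      case (comp g u)
      then obtain bs where "u = ?eval bs" by blast
      with comp.hyps(1) have "g \<circ> u = ?eval ((g = h) # bs)" by auto
      then show ?case by (rule range_eqI)
    qed
  qed
  then show ?thesis by (rule countable_subset) simp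
qed

lemma bimeasurable_id: "bimeasurable M id"
  by (simp add: bimeasurable_def)

lemma bimeasurable_comp: "bimeasurable M f \<Longrightarrow> bimeasurable M g \<Longrightarrow> bimeasurable M (f \<circ> g)"
  unfolding bimeasurable_def by (metis image_comp measurable_comp)

lemma bimeasurable_monoid_gen:
  assumes "bimeasurable M h" "bimeasurable M v" and "w \<in> monoid_gen h v"
  shows "bimeasurable M w"
  using assms(3)
proof (induction rule: monoid_gen_induct)
  case (comp g u)
  have "bimeasurable M g" using comp.hyps(1) assms(1,2) by blast
  then show ?case using comp.IH by (rule bimeasurable_comp)
qed (rule bimeasurable_id)

lemma bimeasurable_image_sets: "bimeasurable M g \<Longrightarrow> A \<in> sets M \<Longrightarrow> g ` A \<in> sets M"
  by (simp add: bimeasurable_def)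

lemma bimeasurable_measurable: "bimeasurable M g \<Longrightarrow> g \<in> M \<rightarrow>\<^sub>M M"
  by (simp add: bimeasurable_def)

lemma image_monoid_gen_subset:
  assumes "h ` X \<subseteq> X" "v ` X \<subseteq> X" and "w \<in> monoid_gen h v"
  shows "w ` X \<subseteq> X"
  using assms(3) by (induction rule: monoid_gen_induct) (use assms(1,2) in \<open>auto simp: image_comp[symmetric]\<close>)

lemma inj_on_monoid_gen:
  assumes "h ` X \<subseteq> X" "v ` X \<subseteq> X" "inj_on h X" "inj_on v X" and "w \<in> monoid_gen h v"
  shows "inj_on w X"
  using assms(5)
proof (induction rule: monoid_gen_induct)
  case (comp g u)
  have "u ` X \<subseteq> X" using image_monoid_gen_subset[OF assms(1,2) comp.hyps(2)] .
  moreover have "inj_on g X" using comp.hyps(1) assms(3,4) by auto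
  ultimately show ?case using comp.IH by (blast intro: comp_inj_on inj_on_subset)
qed simp

lemma monoid_gen_image_eq_cancel:
  assumes maps: "h ` X \<subseteq> X" "v ` X \<subseteq> X" and inj: "inj_on h X" "inj_on v X"
    and disj: "h ` X \<inter> v ` X = {}"
    and "w \<in> monoid_gen h v" "w' \<in> monoid_gen h v" "C \<subseteq> X" "C' \<subseteq> X" "w ` C = w' ` C'"
  shows "\<exists>s\<in>monoid_gen h v. s ` C = C' \<or> s ` C' = C"
  using assms(6-)
proof (induction arbitrary: w' C C' rule: monoid_gen_induct)
  case id
  then show ?case by auto
next
  case (comp g u)
  note g = comp.hyps(1) and u = comp.hyps(2) and IH = comp.IH
  have uC: "u ` C \<subseteq> X" using image_monoid_gen_subset[OF maps u] \<open>C \<subseteq> X\<close> by blast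
  from \<open>w' \<in> monoid_gen h v\<close> show ?case
  proof (cases rule: monoid_gen_cases)
    case id
    then have "(g \<circ> u) ` C = C'" using comp.prems(4) by simp
    then show ?thesis using monoid_gen_compI[OF g u] by blast
  next
    case (comp g' u')
    have u'C': "u' ` C' \<subseteq> X"
      using image_monoid_gen_subset[OF maps \<open>u' \<in> monoid_gen h v\<close>] \<open>C' \<subseteq> X\<close> by blast
    have eq: "g ` u ` C = g' ` u' ` C'"
      using \<open>(g \<circ> u) ` C = w' ` C'\<close> \<open>w' = g' \<circ> u'\<close> by (simp add: image_comp)
    show ?thesis
    proof (cases "g = g'")
      case True
      have "inj_on g X" using g inj by blast
      then have "u ` C = u' ` C'" using eq True uC u'C' by (simp add: inj_on_image_eq_iff)
      then show ?thesis using IH \<open>u' \<in> monoid_gen h v\<close> \<open>C \<subseteq> X\<close> \<open>C' \<subseteq> X\<close> by blast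
    next
      case False
      then have "g ` X \<inter> g' ` X = {}" using g \<open>g' \<in> {h, v}\<close> disj by auto
      then have "g ` u ` C = {}" using eq uC u'C' by blast
      then have "C = {}" "C' = {}" using eq by auto
      then show ?thesis using monoid_gen.id_in by auto
    qed
  qed
qed

lemma invariant_on_monoid_genI:
  assumes "bimeasurable M h" "bimeasurable M v"
    and h_into_B: "h ` (space M - B) \<inter> B = {}" and v_into_B: "v ` (space M - B) \<inter> B = {}"
    and inv: "invariant_on M {h, v} B \<mu>"
  shows "invariant_on M (monoid_gen h v) B \<mu>"
  unfolding invariant_on_def
proof (intro ballI impI)
  fix A w assume A: "A \<in> sets M" and "w \<in> monoid_gen h v" and "A \<subseteq> B"
  from \<open>w \<in> monoid_gen h v\<close> show "w ` A \<subseteq> B \<Longrightarrow> emeasure \<mu> (w ` A) = emeasure \<mu> A"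
  proof (induction rule: monoid_gen_induct)
    case (comp g u)
    have uA: "u ` A \<in> sets M"
      using bimeasurable_monoid_gen[OF assms(1,2) comp.hyps(2)] A by (rule bimeasurable_image_sets)
    have guA: "g ` u ` A \<subseteq> B" using comp.prems by (simp add: image_comp)
    have "u ` A \<subseteq> B"
      using guA sets.sets_into_space[OF uA] comp.hyps(1) h_into_B v_into_B by blast
    then have "emeasure \<mu> (g ` u ` A) = emeasure \<mu> (u ` A)"
      using inv uA guA comp.hyps(1) unfolding invariant_on_def by blast
    then show ?case using comp.IH \<open>u ` A \<subseteq> B\<close> by (simp add: image_comp)
  qed simp
qed

lemma suminf_commute_ennreal: "(\<Sum>i. \<Sum>k. f i k :: ennreal) = (\<Sum>k. \<Sum>i. f i k)"
proof -
  have "(\<Sum>i. \<Sum>k. f i k) = (\<Sum>i. \<integral>\<^sup>+k. f i k \<partial>count_space UNIV)"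
    by (simp add: nn_integral_count_space_nat)
  also have "\<dots> = (\<integral>\<^sup>+k. (\<Sum>i. f i k) \<partial>count_space UNIV)"
    by (rule nn_integral_suminf[symmetric]) simp
  also have "\<dots> = (\<Sum>k. \<Sum>i. f i k)"
    by (simp add: nn_integral_count_space_nat)
  finally show ?thesis .
qed

lemma emeasure_eq_suminf_Int:
  assumes "\<And>k. D \<inter> F k \<in> sets N" "disjoint_family F" "D \<subseteq> (\<Union>k. F k)"
  shows "emeasure N D = (\<Sum>k. emeasure N (D \<inter> F k))"
proof -
  have "range (\<lambda>k. D \<inter> F k) \<subseteq> sets N" using assms(1) by blast
  moreover have "disjoint_family (\<lambda>k. D \<inter> F k)"
    using assms(2) unfolding disjoint_family_on_def by blast
  moreover have "(\<Union>k. D \<inter> F k) = D" using assms(3) by blast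
  ultimately show ?thesis by (metis suminf_emeasure)
qed

locale monoid_tiling =
  fixes M :: "'a measure" and h v :: "'a \<Rightarrow> 'a" and B :: "'a set"
  assumes bimeasurable_h: "bimeasurable M h" and bimeasurable_v: "bimeasurable M v"
    and sets_B: "B \<in> sets M"
    and space_eq_UN: "space M = (\<Union>w\<in>monoid_gen h v. w ` B)"
begin

lemma bimeasurable_monoid: "w \<in> monoid_gen h v \<Longrightarrow> bimeasurable M w"
  by (rule bimeasurable_monoid_gen[OF bimeasurable_h bimeasurable_v])

lemma B_subset_space: "B \<subseteq> space M"
  using sets_B by (rule sets.sets_into_space)

definition word :: "nat \<Rightarrow> 'a \<Rightarrow> 'a" where
  "word = from_nat_into (monoid_gen h v)"

definition tile :: "nat \<Rightarrow> 'a set" where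
  "tile = disjointed (\<lambda>k. word k ` B)"

definition tile_base :: "'a set \<Rightarrow> nat \<Rightarrow> 'a set" where
  "tile_base A k = word k -` (A \<inter> tile k) \<inter> B"

lemma word_in_monoid_gen: "word k \<in> monoid_gen h v"
  unfolding word_def by (rule from_nat_into) (blast intro: monoid_gen.id_in)

lemma range_word: "range word = monoid_gen h v"
  unfolding word_def
  by (rule range_from_nat_into) (blast intro: monoid_gen.id_in, rule countable_monoid_gen)

lemma sets_tile: "tile k \<in> sets M"
proof -
  have "range (\<lambda>k. word k ` B) \<subseteq> sets M"
    using bimeasurable_monoid[OF word_in_monoid_gen] sets_B by (blast intro: bimeasurable_image_sets)
  from sets.range_disjointed_sets[OF this] show ?thesis unfolding tile_def by blast
qed

lemma disjoint_family_tile: "disjoint_family tile"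
  unfolding tile_def by (rule disjoint_family_disjointed)

lemma UN_tile: "(\<Union>k. tile k) = space M"
  unfolding tile_def UN_disjointed_eq space_eq_UN range_word[symmetric] by blast

lemma tile_subset_space: "tile k \<subseteq> space M"
  using sets_tile by (rule sets.sets_into_space)

lemma tile_subset: "tile k \<subseteq> word k ` B"
  unfolding tile_def by (rule disjointed_subset)

lemma tile_base_subset: "tile_base A k \<subseteq> B"
  by (simp add: tile_base_def)

lemma image_tile_base: "word k ` tile_base A k = A \<inter> tile k"
  using tile_subset[of k] unfolding tile_base_def by blast

lemma sets_tile_base: "A \<in> sets M \<Longrightarrow> tile_base A k \<in> sets M"
proof -
  assume "A \<in> sets M"
  then have "word k -` (A \<inter> tile k) \<inter> space M \<in> sets M"
    using bimeasurable_measurable[OF bimeasurable_monoid[OF word_in_monoid_gen]] sets_tile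
    by (blast intro: measurable_sets)
  then have "(word k -` (A \<inter> tile k) \<inter> space M) \<inter> B \<in> sets M"
    using sets_B by blast
  moreover have "(word k -` (A \<inter> tile k) \<inter> space M) \<inter> B = tile_base A k"
    using B_subset_space unfolding tile_base_def by blast
  ultimately show ?thesis by simp
qed

lemma emeasure_image_eq_suminf_tiles:
  assumes "sets N = sets M" "bimeasurable M g" "inj_on g (space M)" "A \<in> sets M"
  shows "emeasure N (g ` A) = (\<Sum>k. emeasure N (g ` word k ` tile_base A k))"
proof -
  have A: "A \<subseteq> space M" using assms(4) by (rule sets.sets_into_space)
  have image_Int: "g ` (A \<inter> tile k) = g ` A \<inter> g ` tile k" for k
    using assms(3) A tile_subset_space by (rule inj_on_image_Int)
  have "emeasure N (g ` A) = (\<Sum>k. emeasure N (g ` A \<inter> g ` tile k))"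
  proof (rule emeasure_eq_suminf_Int)
    show "g ` A \<inter> g ` tile k \<in> sets N" for k
      unfolding assms(1) image_Int[symmetric]
      using assms(2) sets.Int[OF assms(4) sets_tile] by (rule bimeasurable_image_sets)
    show "disjoint_family (\<lambda>k. g ` tile k)"
      unfolding disjoint_family_on_def
    proof (intro ballI impI)
      fix m n :: nat assume "m \<noteq> n"
      have "g ` tile m \<inter> g ` tile n = g ` (tile m \<inter> tile n)"
        using assms(3) tile_subset_space tile_subset_space by (rule inj_on_image_Int[symmetric])
      also have "tile m \<inter> tile n = {}"
        using disjoint_family_tile \<open>m \<noteq> n\<close> unfolding disjoint_family_on_def by blast
      finally show "g ` tile m \<inter> g ` tile n = {}" by simp
    qed
    have "A \<subseteq> (\<Union>k. tile k)" using A by (simp only: UN_tile)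
    then show "g ` A \<subseteq> (\<Union>k. g ` tile k)" by blast
  qed
  also have "\<dots> = (\<Sum>k. emeasure N (g ` word k ` tile_base A k))"
    by (simp only: image_tile_base image_Int)
  finally show ?thesis .
qed

lemma emeasure_eq_suminf_tile_base:
  assumes "sets \<mu> = sets M" "invariant_on M (monoid_gen h v) (space M) \<mu>" "A \<in> sets M"
  shows "emeasure \<mu> A = (\<Sum>k. emeasure \<mu> (tile_base A k))"
proof -
  have "emeasure \<mu> (word k ` tile_base A k) = emeasure \<mu> (tile_base A k)" for k
  proof -
    have "tile_base A k \<in> sets M" using assms(3) by (rule sets_tile_base)
    moreover have "tile_base A k \<subseteq> space M" using tile_base_subset B_subset_space by blast
    moreover have "word k ` tile_base A k \<subseteq> space M"
      unfolding image_tile_base using tile_subset_space by blast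
    ultimately show ?thesis using assms(2) word_in_monoid_gen unfolding invariant_on_def by blast
  qed
  then show ?thesis
    using emeasure_image_eq_suminf_tiles[OF assms(1) bimeasurable_id inj_on_id[of "space M"] assms(3)]
    by simp
qed

lemma invariant_measures_eq:
  assumes "sets \<mu> = sets M" "sets \<nu> = sets M"
    and "invariant_on M {h, v} (space M) \<mu>" "invariant_on M {h, v} (space M) \<nu>"
    and "\<And>C. C \<in> sets M \<Longrightarrow> C \<subseteq> B \<Longrightarrow> emeasure \<mu> C = emeasure \<nu> C"
    and "A \<in> sets M"
  shows "emeasure \<mu> A = emeasure \<nu> A"
proof -
  have "invariant_on M (monoid_gen h v) (space M) \<mu>" "invariant_on M (monoid_gen h v) (space M) \<nu>"
    using invariant_on_monoid_genI[OF bimeasurable_h bimeasurable_v _ _ assms(3)]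
      invariant_on_monoid_genI[OF bimeasurable_h bimeasurable_v _ _ assms(4)] by simp_all
  then show ?thesis
    using emeasure_eq_suminf_tile_base[OF assms(1) _ assms(6)] emeasure_eq_suminf_tile_base[OF assms(2) _ assms(6)]
      assms(5)[OF sets_tile_base[OF assms(6)] tile_base_subset] by simp
qed

end

locale free_monoid_tiling = monoid_tiling +
  assumes inj_h: "inj_on h (space M)" and inj_v: "inj_on v (space M)"
    and disjoint_images: "h ` space M \<inter> v ` space M = {}"
begin

lemma image_space_subset: "h ` space M \<subseteq> space M" "v ` space M \<subseteq> space M"
  using bimeasurable_image_sets[OF bimeasurable_h sets.top] bimeasurable_image_sets[OF bimeasurable_v sets.top]
  by (auto dest: sets.sets_into_space)

lemma inj_on_monoid: "w \<in> monoid_gen h v \<Longrightarrow> inj_on w (space M)"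
  by (rule inj_on_monoid_gen[OF image_space_subset inj_h inj_v])

lemma invariant_emeasure_eq_if_image_eq:
  assumes inv: "invariant_on M (monoid_gen h v) B \<mu>"
    and C: "C \<in> sets M" "C \<subseteq> B" and C': "C' \<in> sets M" "C' \<subseteq> B"
    and "w \<in> monoid_gen h v" "w' \<in> monoid_gen h v" "w ` C = w' ` C'"
  shows "emeasure \<mu> C = emeasure \<mu> C'"
proof -
  have "C \<subseteq> space M" "C' \<subseteq> space M" using C(2) C'(2) B_subset_space by auto
  from monoid_gen_image_eq_cancel[OF image_space_subset inj_h inj_v disjoint_images assms(6,7) this assms(8)]
  obtain s where s: "s \<in> monoid_gen h v" and "s ` C = C' \<or> s ` C' = C" by blast
  then consider "s ` C = C'" | "s ` C' = C" by blast
  then show ?thesis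
    using inv s C C' unfolding invariant_on_def by cases (metis (no_types))+
qed

definition extension :: "'a measure \<Rightarrow> 'a measure" where
  "extension \<mu> = measure_of (space M) (sets M) (\<lambda>A. \<Sum>k. emeasure \<mu> (tile_base A k))"

lemma sets_extension: "sets (extension \<mu>) = sets M"
  unfolding extension_def by (rule sets.sets_measure_of_eq)

lemma sets_restrict_space_BI: "C \<in> sets M \<Longrightarrow> C \<subseteq> B \<Longrightarrow> C \<in> sets (restrict_space M B)"
  using sets_B by (simp add: sets_restrict_space_iff)

lemma emeasure_extension:
  assumes sets_\<mu>: "sets \<mu> = sets (restrict_space M B)" and "A \<in> sets M"
  shows "emeasure (extension \<mu>) A = (\<Sum>k. emeasure \<mu> (tile_base A k))"
  unfolding extension_def
proof (rule emeasure_measure_of_sigma[OF sets.sigma_algebra_axioms _ _ assms(2)])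
  show "positive (sets M) (\<lambda>A. \<Sum>k. emeasure \<mu> (tile_base A k))"
    by (simp add: positive_def tile_base_def)
  show "countably_additive (sets M) (\<lambda>A. \<Sum>k. emeasure \<mu> (tile_base A k))"
    unfolding countably_additive_def
  proof (intro allI impI)
    fix F :: "nat \<Rightarrow> 'a set"
    assume F: "range F \<subseteq> sets M" and "disjoint_family F"
    have "(\<Sum>i. emeasure \<mu> (tile_base (F i) k)) = emeasure \<mu> (tile_base (\<Union>i. F i) k)" for k
    proof -
      have "tile_base (F i) k \<in> sets \<mu>" for i
        unfolding sets_\<mu> using F by (intro sets_restrict_space_BI sets_tile_base tile_base_subset) auto
      then have "range (\<lambda>i. tile_base (F i) k) \<subseteq> sets \<mu>" by blast
      moreover have "disjoint_family (\<lambda>i. tile_base (F i) k)"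
        using \<open>disjoint_family F\<close> unfolding disjoint_family_on_def tile_base_def by blast
      moreover have "(\<Union>i. tile_base (F i) k) = tile_base (\<Union>i. F i) k"
        unfolding tile_base_def by blast
      ultimately show ?thesis by (metis suminf_emeasure)
    qed
    then show "(\<Sum>i. \<Sum>k. emeasure \<mu> (tile_base (F i) k)) = (\<Sum>k. emeasure \<mu> (tile_base (\<Union>i. F i) k))"
      by (simp add: suminf_commute_ennreal[where f = "\<lambda>i k. emeasure \<mu> (tile_base (F i) k)"])
  qed
qed

lemma emeasure_extension_image:
  assumes sets_\<mu>: "sets \<mu> = sets (restrict_space M B)" and inv: "invariant_on M (monoid_gen h v) B \<mu>"
    and w: "w \<in> monoid_gen h v" and C: "C \<in> sets M" "C \<subseteq> B"
  shows "emeasure (extension \<mu>) (w ` C) = emeasure \<mu> C"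
proof -
  have wC: "w ` C \<in> sets M" using bimeasurable_monoid[OF w] C(1) by (rule bimeasurable_image_sets)
  have C_tile: "C \<inter> w -` tile k \<in> sets M" for k
  proof -
    have "w -` tile k \<inter> space M \<in> sets M"
      using bimeasurable_measurable[OF bimeasurable_monoid[OF w]] sets_tile by (rule measurable_sets)
    moreover have "C \<inter> w -` tile k = (w -` tile k \<inter> space M) \<inter> C"
      using C B_subset_space by blast
    ultimately show ?thesis using C(1) by simp
  qed
  have "emeasure \<mu> (tile_base (w ` C) k) = emeasure \<mu> (C \<inter> w -` tile k)" for k
  proof (rule invariant_emeasure_eq_if_image_eq[OF inv _ tile_base_subset C_tile _ word_in_monoid_gen w])
    show "tile_base (w ` C) k \<in> sets M" using wC by (rule sets_tile_base)
    show "C \<inter> w -` tile k \<subseteq> B" using C(2) by blast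
    show "word k ` tile_base (w ` C) k = w ` (C \<inter> w -` tile k)"
      unfolding image_tile_base by blast
  qed
  then have "emeasure (extension \<mu>) (w ` C) = (\<Sum>k. emeasure \<mu> (C \<inter> w -` tile k))"
    using emeasure_extension[OF sets_\<mu> wC] by simp
  also have "\<dots> = emeasure \<mu> C"
  proof (rule emeasure_eq_suminf_Int[symmetric])
    show "C \<inter> w -` tile k \<in> sets \<mu>" for k
      unfolding sets_\<mu> using C_tile by (rule sets_restrict_space_BI) (use C(2) in blast)
    show "disjoint_family (\<lambda>k. w -` tile k)"
      using disjoint_family_tile unfolding disjoint_family_on_def by blast
    have "w ` C \<subseteq> (\<Union>k. tile k)" using wC by (simp only: UN_tile sets.sets_into_space)
    then show "C \<subseteq> (\<Union>k. w -` tile k)" by blast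
  qed
  finally show ?thesis .
qed

lemma emeasure_extension_subset:
  assumes "sets \<mu> = sets (restrict_space M B)" "invariant_on M (monoid_gen h v) B \<mu>"
    and "A \<in> sets M" "A \<subseteq> B"
  shows "emeasure (extension \<mu>) A = emeasure \<mu> A"
  using emeasure_extension_image[OF assms(1,2) monoid_gen.id_in assms(3,4)] by simp

lemma invariant_on_extension:
  assumes sets_\<mu>: "sets \<mu> = sets (restrict_space M B)" and inv: "invariant_on M (monoid_gen h v) B \<mu>"
  shows "invariant_on M (monoid_gen h v) (space M) (extension \<mu>)"
  unfolding invariant_on_def
proof (intro ballI impI)
  fix A g assume A: "A \<in> sets M" and g: "g \<in> monoid_gen h v"
  have "emeasure (extension \<mu>) (g ` A)
      = (\<Sum>k. emeasure (extension \<mu>) ((g \<circ> word k) ` tile_base A k))"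
    using emeasure_image_eq_suminf_tiles[OF sets_extension bimeasurable_monoid[OF g] inj_on_monoid[OF g] A]
    by (simp add: image_comp)
  also have "\<dots> = (\<Sum>k. emeasure \<mu> (tile_base A k))"
    using emeasure_extension_image[OF sets_\<mu> inv monoid_gen_comp[OF g word_in_monoid_gen]
        sets_tile_base[OF A] tile_base_subset] by simp
  also have "\<dots> = emeasure (extension \<mu>) A"
    using emeasure_extension[OF sets_\<mu> A] by simp
  finally show "emeasure (extension \<mu>) (g ` A) = emeasure (extension \<mu>) A" .
qed

lemma ex_invariant_extension:
  assumes "sets \<mu> = sets (restrict_space M B)" "invariant_on M (monoid_gen h v) B \<mu>"
  shows "\<exists>\<nu>. sets \<nu> = sets M \<and> invariant_on M (monoid_gen h v) (space M) \<nu>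
           \<and> (\<forall>A\<in>sets M. A \<subseteq> B \<longrightarrow> emeasure \<nu> A = emeasure \<mu> A)"
proof (intro exI[where x = "extension \<mu>"] conjI ballI impI)
  show "sets (extension \<mu>) = sets M" by (rule sets_extension)
  show "invariant_on M (monoid_gen h v) (space M) (extension \<mu>)"
    using assms by (rule invariant_on_extension)
  show "emeasure (extension \<mu>) A = emeasure \<mu> A" if "A \<in> sets M" "A \<subseteq> B" for A
    using assms that by (rule emeasure_extension_subset)
qed

end

theorem lemma8:
  fixes M :: "'a measure" and h v :: "'a \<Rightarrow> 'a" and B :: "'a set"
  assumes bh: "bimeasurable M h" and bv: "bimeasurable M v"
    and ih: "inj_on h (space M)" and iv: "inj_on v (space M)"
    and disj: "h ` space M \<inter> v ` space M = {}"
    and cover: "h ` space M \<union> v ` space M = space M"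
    and B: "B \<in> sets M"
    and gen: "space M = (\<Union>w\<in>monoid_gen h v. w ` B)"
  shows
    "(\<forall>\<mu> \<nu>. sets \<mu> = sets M \<longrightarrow> sets \<nu> = sets M
        \<longrightarrow> invariant_on M {h, v} (space M) \<mu> \<longrightarrow> invariant_on M {h, v} (space M) \<nu>
        \<longrightarrow> (\<forall>A\<in>sets M. A \<subseteq> B \<longrightarrow> emeasure \<mu> A = emeasure \<nu> A)
        \<longrightarrow> (\<forall>A\<in>sets M. emeasure \<mu> A = emeasure \<nu> A))
   \<and> (\<forall>\<mu>. sets \<mu> = sets (restrict_space M B) \<longrightarrow> invariant_on M (monoid_gen h v) B \<mu>
        \<longrightarrow> (\<exists>\<nu>. sets \<nu> = sets M \<and> invariant_on M (monoid_gen h v) (space M) \<nu>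
               \<and> (\<forall>A\<in>sets M. A \<subseteq> B \<longrightarrow> emeasure \<nu> A = emeasure \<mu> A)))
   \<and> (h ` (space M - B) \<inter> B = {} \<and> v ` (space M - B) \<inter> B = {} \<longrightarrow>
      (\<forall>\<mu>. sets \<mu> = sets (restrict_space M B) \<longrightarrow> invariant_on M {h, v} B \<mu>
        \<longrightarrow> (\<exists>\<nu>. sets \<nu> = sets M \<and> invariant_on M (monoid_gen h v) (space M) \<nu>
               \<and> (\<forall>A\<in>sets M. A \<subseteq> B \<longrightarrow> emeasure \<nu> A = emeasure \<mu> A))))"
proof -
  interpret free_monoid_tiling M h v B
    using bh bv B gen ih iv disj by unfold_locales
  show ?thesis
  proof (intro conjI allI impI ballI)
    fix \<mu> \<nu> :: "'a measure" and A
    assume "sets \<mu> = sets M" "sets \<nu> = sets M"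
      "invariant_on M {h, v} (space M) \<mu>" "invariant_on M {h, v} (space M) \<nu>"
      and "\<forall>A\<in>sets M. A \<subseteq> B \<longrightarrow> emeasure \<mu> A = emeasure \<nu> A" and "A \<in> sets M"
    then show "emeasure \<mu> A = emeasure \<nu> A"
      using invariant_measures_eq[of \<mu> \<nu> A] by blast
  next
    fix \<mu> :: "'a measure"
    assume "sets \<mu> = sets (restrict_space M B)" "invariant_on M (monoid_gen h v) B \<mu>"
    then show "\<exists>\<nu>. sets \<nu> = sets M \<and> invariant_on M (monoid_gen h v) (space M) \<nu>
       \<and> (\<forall>A\<in>sets M. A \<subseteq> B \<longrightarrow> emeasure \<nu> A = emeasure \<mu> A)"
      by (rule ex_invariant_extension)
  next
    fix \<mu> :: "'a measure"
    assume "h ` (space M - B) \<inter> B = {} \<and> v ` (space M - B) \<inter> B = {}"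
      and sets_\<mu>: "sets \<mu> = sets (restrict_space M B)" and inv: "invariant_on M {h, v} B \<mu>"
    then have "invariant_on M (monoid_gen h v) B \<mu>"
      using invariant_on_monoid_genI[OF bh bv _ _ inv] by blast
    then show "\<exists>\<nu>. sets \<nu> = sets M \<and> invariant_on M (monoid_gen h v) (space M) \<nu>
       \<and> (\<forall>A\<in>sets M. A \<subseteq> B \<longrightarrow> emeasure \<nu> A = emeasure \<mu> A)"
      by (rule ex_invariant_extension[OF sets_\<mu>])
  qed
qed

end
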